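(* Consider the $K$-user shared-link broadcast (coded caching) problem with $\Lambda\le K$ shared helper caches of normalized size $\gamma=M/N$, with $N\ge K$ files, under uncoded cache placement, as described in the context. Let $\boldsymbol{\mathcal{L}}=(\mathcal{L}_1,\dots,\mathcal{L}_\Lambda)$ be any user-to-cache association profile (non-negative integers, $\mathcal{L}_1\ge\mathcal{L}_2\ge\dots\ge\mathcal{L}_\Lambda$, $\sum_{\lambda}\mathcal{L}_\lambda=K$). For $i\in\{0,1,\dots,\Lambda\}$ let $$f(i)=\frac{\sum_{r=1}^{\Lambda-i}\mathcal{L}_r\binom{\Lambda-r}{i}}{\binom{\Lambda}{i}},$$ and let $\mathrm{Conv}(f)$ denote the lower convex envelope of the points $\{(i,f(i)) : i\in\{0,1,\dots,\Lambda\}\}$. Then for every $\gamma\in\{\frac{1}{\Lambda},\frac{2}{\Lambda},\dots,1\}$, the optimal worst-case delivery time satisfies $$T^*(\boldsymbol{\mathcal{L}})=\mathrm{Conv}(f)\big|_{i=\Lambda\gamma}.$$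
   Context: Setting: a server has a library of $N$ files $W^1,\dots,W^N$, each of size one unit. There are $K$ users and $\Lambda\le K$ helper caches, each able to store $M\le N$ units; $\gamma=M/N$, and $N\ge K$. Communication has three phases. (a) Cache placement: each cache $\lambda\in[\Lambda]$ stores content $\mathcal{Z}_\lambda$ of size at most $M$ consisting of uncoded pieces (subsets of bits) of the library files (uncoded cache placement); placement is done without knowledge of the later user-to-cache association or of the demands. (b) User-to-cache association: each user is assigned to exactly one cache; this is a partition $\mathcal{U}=\{\mathcal{U}_1,\dots,\mathcal{U}_\Lambda\}$ of $[K]$, where $\mathcal{U}_\lambda$ is the set of users assigned to cache $\lambda$, each of whom has free access to $\mathcal{Z}_\lambda$. Its profile $\boldsymbol{\mathcal{L}}$ is the vector of cardinalities $|\mathcal{U}_\lambda|$ sorted in non-increasing order; $\mathcal{U}_{\boldsymbol{\mathcal{L}}}$ denotes the class of all associations with profile $\boldsymbol{\mathcal{L}}$. (c) Delivery: each user $k$ requests a file $W^{d_k}$, giving a demand vector $\boldsymbol{d}\in[N]^K$; knowing $\boldsymbol{d}$ and $\mathcal{U}$, the server transmits over an error-free shared broadcast link so that every user can decode its requested file from the transmission and the content of its assigned cache. A caching-and-delivery scheme $\chi$ specifies placement and delivery; $T(\mathcal{U},\boldsymbol{d},\chi)$ is the delivery duration, normalized so that one time unit is the time to send one file over the link. The optimal worst-case delivery time of a profile is $T^*(\boldsymbol{\mathcal{L}})=\min_{\chi}\max_{\mathcal{U}\in\mathcal{U}_{\boldsymbol{\mathcal{L}}},\,\boldsymbol{d}\in[N]^K}T(\mathcal{U},\boldsymbol{d},\chi)$,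 the minimum being over schemes with uncoded cache placement. Binomial coefficients $\binom{a}{b}$ with $b>a$ are zero. *)

theory Defs
  imports Complex_Main
begin

text \<open>Conventions: users are 0..<K, caches 0..<Lambda, files 0..<N, bits of a file 0..<F
  (subpacketization F is chosen by the scheme). A library is a map (file,bit) to bool.
  The profile L is indexed 1..Lambda as in the paper.\<close>

definition valid_assoc :: "nat \<Rightarrow> nat \<Rightarrow> (nat \<Rightarrow> nat) \<Rightarrow> (nat \<Rightarrow> nat) \<Rightarrow> bool" where
  "valid_assoc K Lam L a \<longleftrightarrow> (\<forall>k<K. a k < Lam) \<and>
     (\<exists>\<sigma>. bij_betw \<sigma> {1..Lam} {..<Lam} \<and>
          (\<forall>r\<in>{1..Lam}. card {k. k < K \<and> a k = \<sigma> r} = L r))"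

definition valid_demand :: "nat \<Rightarrow> nat \<Rightarrow> (nat \<Rightarrow> nat) \<Rightarrow> bool" where
  "valid_demand N K d \<longleftrightarrow> (\<forall>k<K. d k < N)"

definition mask :: "(nat \<times> nat) set \<Rightarrow> (nat \<times> nat \<Rightarrow> bool) \<Rightarrow> (nat \<times> nat \<Rightarrow> bool)" where
  "mask Z W = (\<lambda>p. if p \<in> Z then W p else False)"

definition achievable ::
  "nat \<Rightarrow> nat \<Rightarrow> nat \<Rightarrow> real \<Rightarrow> (nat \<Rightarrow> nat) \<Rightarrow> real \<Rightarrow> bool" where
  "achievable N K Lam M L T \<longleftrightarrow>
    (\<exists>F::nat. F > 0 \<and>
      (\<exists>Z :: nat \<Rightarrow> (nat \<times> nat) set.
       \<exists>enc :: (nat \<Rightarrow> nat) \<Rightarrow> (nat \<Rightarrow> nat) \<Rightarrow> (nat \<times> nat \<Rightarrow> bool) \<Rightarrow> bool list.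
       \<exists>dec :: (nat \<Rightarrow> nat) \<Rightarrow> (nat \<Rightarrow> nat) \<Rightarrow> nat \<Rightarrow> bool list \<Rightarrow> (nat \<times> nat \<Rightarrow> bool) \<Rightarrow> nat \<Rightarrow> bool.
        (\<forall>l<Lam. Z l \<subseteq> {..<N} \<times> {..<F} \<and> real (card (Z l)) \<le> M * real F) \<and>
        (\<forall>a d. valid_assoc K Lam L a \<and> valid_demand N K d \<longrightarrow>
           (\<exists>B::nat. real B \<le> T * real F \<and>
              (\<forall>W. length (enc a d W) = B) \<and>
              (\<forall>k<K. \<forall>W. \<forall>j<F.
                 dec a d k (enc a d W) (mask (Z (a k)) W) j = W (d k, j))))))"

definition T_opt :: "nat \<Rightarrow> nat \<Rightarrow> nat \<Rightarrow> real \<Rightarrow> (nat \<Rightarrow> nat) \<Rightarrow> real" where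
  "T_opt N K Lam M L = Inf {T. achievable N K Lam M L T}"

definition lower_conv_env :: "nat \<Rightarrow> (nat \<Rightarrow> real) \<Rightarrow> real \<Rightarrow> real" where
  "lower_conv_env n g x = Inf {(\<Sum>i\<le>n. c i * g i) | c.
      (\<forall>i\<le>n. c i \<ge> 0) \<and> (\<Sum>i\<le>n. c i) = 1 \<and> (\<Sum>i\<le>n. c i * real i) = x}"

definition f_profile :: "nat \<Rightarrow> (nat \<Rightarrow> nat) \<Rightarrow> nat \<Rightarrow> real" where
  "f_profile Lam L i =
     (\<Sum>r = 1..Lam - i. real (L r) * real ((Lam - r) choose i)) / real (Lam choose i)"

end

(* Achievability: split every file into C(Lam, t) subfiles indexed by the t-sets of caches and
   store subfile S at the caches in S. Users occupying the same slot in their caches are served by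
   coded multicasts over (t+1)-sets of caches, as in the Maddah-Ali--Niesen scheme; each multicast
   is sent only once, on behalf of the cache of lowest rank in the set, which costs
   sum_r L_r C(Lam - r, t) subfiles, i.e. f(t).
   Converse: for every ordering of the caches, attach the r-th block of L_r users to the r-th cache
   and let the users demand distinct files. The users can then decode block by block, so every bit
   of a demanded file missing from the caches of its own and of all earlier blocks must be
   transmitted. Averaging over orderings and over cyclic shifts of the demands bounds the load from
   below by the mean, over all bits, of a function of the number of caches missing the bit; this
   function is convex and nondecreasing, so by Jensen and the memory constraint the load is at least
   its value at Lam - t, which is f(t). The same convexity shows that f coincides with its lower
   convex envelope at the integers. *)

theory Submission
  imports Defs "HOL-Combinatorics.Multiset_Permutations" "HOL-Library.Product_Lexorder"
begin

section \<open>Discrete convexity\<close>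

lemma supporting_line_of_convex_seq:
  fixes g :: "nat \<Rightarrow> real"
  assumes convex: "incseq (\<lambda>n. g (Suc n) - g n)"
  shows "g n + (real x - real n) * (g (Suc n) - g n) \<le> g x"
proof -
  define s where "s = g (Suc n) - g n"
  show ?thesis
  proof (cases "n \<le> x")
    case True
    have "real (card {n..<x}) * s \<le> (\<Sum>i = n..<x. g (Suc i) - g i)"
      using convex by (intro sum_bounded_below) (auto simp: s_def incseq_def)
    then show ?thesis using True by (simp add: sum_Suc_diff' s_def algebra_simps)
  next
    case False
    have "(\<Sum>i = x..<n. g (Suc i) - g i) \<le> real (card {x..<n}) * s"
      using convex by (intro sum_bounded_above) (auto simp: s_def incseq_def)
    then show ?thesis using False by (simp add: sum_Suc_diff' s_def algebra_simps)
  qed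
qed

lemma convex_mono_seq_Jensen:
  fixes g :: "nat \<Rightarrow> real" and x :: "'a \<Rightarrow> nat"
  assumes "mono g" and "incseq (\<lambda>n. g (Suc n) - g n)"
    and "\<forall>a\<in>A. 0 \<le> c a" and "sum c A = 1" and "real n \<le> (\<Sum>a\<in>A. c a * real (x a))"
  shows "g n \<le> (\<Sum>a\<in>A. c a * g (x a))"
proof -
  define s where "s = g (Suc n) - g n"
  have "0 \<le> s" using \<open>mono g\<close> by (simp add: s_def monoD)
  have "g n \<le> g n + s * ((\<Sum>a\<in>A. c a * real (x a)) - real n)"
    using \<open>0 \<le> s\<close> assms(5) by simp
  also have "\<dots> = g n * sum c A + s * (\<Sum>a\<in>A. c a * real (x a)) - s * real n * sum c A"
    using assms(4) by (simp add: algebra_simps)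
  also have "\<dots> = (\<Sum>a\<in>A. c a * (g n + (real (x a) - real n) * s))"
    by (simp add: sum.distrib sum_subtractf sum_distrib_left sum_distrib_right algebra_simps)
  also have "\<dots> \<le> (\<Sum>a\<in>A. c a * g (x a))"
    using assms(3) supporting_line_of_convex_seq[OF assms(2)]
    by (intro sum_mono mult_left_mono) (auto simp: s_def)
  finally show ?thesis .
qed

lemma lower_conv_env_eq_at_point:
  assumes "t \<le> n"
    and "\<And>c. \<forall>i\<le>n. 0 \<le> c i \<Longrightarrow> (\<Sum>i\<le>n. c i) = 1 \<Longrightarrow> (\<Sum>i\<le>n. c i * real i) = real t
           \<Longrightarrow> g t \<le> (\<Sum>i\<le>n. c i * g i)"
  shows "lower_conv_env n g (real t) = g t"
  unfolding lower_conv_env_def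
proof (rule cInf_eq_minimum)
  let ?c = "\<lambda>i. if i = t then 1 else 0 :: real"
  have "(\<Sum>i\<le>n. ?c i * g i) = g t" "(\<Sum>i\<le>n. ?c i) = 1" "(\<Sum>i\<le>n. ?c i * real i) = real t"
    using \<open>t \<le> n\<close> by (simp_all add: if_distrib[of "\<lambda>c. c * _"] cong: if_cong)
  then show "g t \<in> {\<Sum>i\<le>n. c i * g i |c.
      (\<forall>i\<le>n. 0 \<le> c i) \<and> (\<Sum>i\<le>n. c i) = 1 \<and> (\<Sum>i\<le>n. c i * real i) = real t}"
    by (intro CollectI exI[of _ ?c]) auto
qed (use assms(2) in blast)

(* The first r caches of a uniformly random ordering all lie among x given caches with probability
   C(x, r) / C(Lam, r); so miss_load Lam L x is the expected number of users whose own cache and the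
   caches of all earlier blocks miss a bit that is missing from x caches. *)
definition miss_load :: "nat \<Rightarrow> (nat \<Rightarrow> nat) \<Rightarrow> nat \<Rightarrow> real" where
  "miss_load Lam L x = (\<Sum>r = 1..Lam. real (L r) * real (x choose r) / real (Lam choose r))"

lemma miss_load_Suc_diff:
  "miss_load Lam L (Suc x) - miss_load Lam L x
     = (\<Sum>r = 1..Lam. real (L r) * real (x choose (r - 1)) / real (Lam choose r))"
  unfolding miss_load_def sum_subtractf[symmetric]
proof (rule sum.cong)
  fix r assume "r \<in> {1..Lam}"
  then obtain q where "r = Suc q" by (cases r) auto
  then show "real (L r) * real (Suc x choose r) / real (Lam choose r)
      - real (L r) * real (x choose r) / real (Lam choose r)
      = real (L r) * real (x choose (r - 1)) / real (Lam choose r)"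
    by (simp add: diff_divide_distrib[symmetric] algebra_simps)
qed simp

lemma mono_miss_load: "mono (miss_load Lam L)"
proof (rule incseq_SucI)
  fix x
  have "0 \<le> miss_load Lam L (Suc x) - miss_load Lam L x"
    unfolding miss_load_Suc_diff by (intro sum_nonneg) auto
  then show "miss_load Lam L x \<le> miss_load Lam L (Suc x)" by simp
qed

lemma convex_miss_load: "incseq (\<lambda>x. miss_load Lam L (Suc x) - miss_load Lam L x)"
  unfolding miss_load_Suc_diff
  by (intro incseq_SucI sum_mono divide_right_mono mult_left_mono) (auto intro: binomial_right_mono)

lemma f_profile_eq_miss_load:
  assumes "i \<le> Lam"
  shows "f_profile Lam L i = miss_load Lam L (Lam - i)"
proof -
  have "f_profile Lam L i = (\<Sum>r = 1..Lam - i. real (L r) * real ((Lam - i) choose r) / real (Lam choose r))"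
    unfolding f_profile_def sum_divide_distrib
  proof (rule sum.cong)
    fix r assume r: "r \<in> {1..Lam - i}"
    have "(Lam choose (Lam - i)) * ((Lam - i) choose r) = (Lam choose r) * ((Lam - r) choose (Lam - i - r))"
      using r by (intro choose_mult) auto
    moreover have "Lam choose (Lam - i) = Lam choose i"
      using assms by (simp add: binomial_symmetric[symmetric])
    moreover have "(Lam - r) choose (Lam - i - r) = (Lam - r) choose i"
      using r assms binomial_symmetric[of i "Lam - r"] by (simp add: add.commute le_diff_conv2)
    ultimately have "real (Lam choose i) * real ((Lam - i) choose r) = real (Lam choose r) * real ((Lam - r) choose i)"
      by (metis of_nat_mult)
    moreover have "0 < real (Lam choose i)" "0 < real (Lam choose r)" using r assms by auto
    ultimately show "real (L r) * real ((Lam - r) choose i) / real (Lam choose i)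
        = real (L r) * real ((Lam - i) choose r) / real (Lam choose r)"
      by (simp add: field_simps)
  qed simp
  also have "\<dots> = miss_load Lam L (Lam - i)"
    unfolding miss_load_def
    by (rule sum.mono_neutral_left) auto
  finally show ?thesis .
qed

lemma lower_conv_env_f_profile:
  assumes "t \<le> Lam"
  shows "lower_conv_env Lam (f_profile Lam L) (real t) = f_profile Lam L t"
proof (rule lower_conv_env_eq_at_point[OF assms])
  fix c assume c: "\<forall>i\<le>Lam. 0 \<le> c i" "(\<Sum>i\<le>Lam. c i) = 1" "(\<Sum>i\<le>Lam. c i * real i) = real t"
  have "real (Lam - t) = (\<Sum>i\<le>Lam. c i * real (Lam - i))"
    using c(2,3) assms by (simp add: sum_subtractf right_diff_distrib sum_distrib_right[symmetric])
  then have "miss_load Lam L (Lam - t) \<le> (\<Sum>i\<le>Lam. c i * miss_load Lam L (Lam - i))"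
    using c by (intro convex_mono_seq_Jensen[OF mono_miss_load convex_miss_load]) auto
  then show "f_profile Lam L t \<le> (\<Sum>i\<le>Lam. c i * f_profile Lam L i)"
    using assms by (simp add: f_profile_eq_miss_load)
qed

section \<open>The lower bound\<close>

lemma card_perms_with_prefix_in:
  assumes "finite A" "C \<subseteq> A" "r \<le> card A"
  shows "card {xs \<in> permutations_of_set A. set (take r xs) \<subseteq> C} = (card C choose r) * fact r * fact (card A - r)"
  using assms
proof (induction r arbitrary: A C)
  case 0
  then show ?case by simp
next
  case (Suc r)
  let ?S = "\<lambda>x. {ys \<in> permutations_of_set (A - {x}). set (take r ys) \<subseteq> C - {x}}"
  have "finite C" using Suc.prems finite_subset by blast
  have split: "{xs \<in> permutations_of_set A. set (take (Suc r) xs) \<subseteq> C} = (\<Union>x\<in>C. (#) x ` ?S x)"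
  proof (intro equalityI subsetI)
    fix xs assume xs: "xs \<in> {xs \<in> permutations_of_set A. set (take (Suc r) xs) \<subseteq> C}"
    then obtain x ys where "xs = x # ys"
      using Suc.prems by (cases xs) (auto simp: permutations_of_set_def)
    with xs show "xs \<in> (\<Union>x\<in>C. (#) x ` ?S x)"
      by (auto simp: permutations_of_set_def dest: in_set_takeD)
  next
    fix xs assume "xs \<in> (\<Union>x\<in>C. (#) x ` ?S x)"
    then show "xs \<in> {xs \<in> permutations_of_set A. set (take (Suc r) xs) \<subseteq> C}"
      using Suc.prems by (auto simp: permutations_of_set_def)
  qed
  have "card {xs \<in> permutations_of_set A. set (take (Suc r) xs) \<subseteq> C} = (\<Sum>x\<in>C. card ((#) x ` ?S x))"
    unfolding split using \<open>finite C\<close> Suc.prems by (intro card_UN_disjoint) auto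
  also have "\<dots> = (\<Sum>x\<in>C. card (?S x))"
    by (simp add: card_image)
  also have "\<dots> = (\<Sum>x\<in>C. (card C - 1 choose r) * fact r * fact (card A - Suc r))"
  proof (rule sum.cong)
    fix x assume "x \<in> C"
    then have "card (A - {x}) = card A - 1" "card (C - {x}) = card C - 1"
      using Suc.prems \<open>finite C\<close> by auto
    moreover have "card (?S x) = (card (C - {x}) choose r) * fact r * fact (card (A - {x}) - r)"
      by (rule Suc.IH) (use Suc.prems calculation in auto)
    ultimately show "card (?S x) = (card C - 1 choose r) * fact r * fact (card A - Suc r)"
      by simp
  qed simp
  also have "\<dots> = card C * ((card C - 1 choose r) * fact r * fact (card A - Suc r))"
    by simp
  also have "\<dots> = Suc r * (card C choose Suc r) * fact r * fact (card A - Suc r)"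
    by (metis diff_Suc_1 mult.assoc times_binomial_minus1_eq zero_less_Suc)
  also have "\<dots> = (card C choose Suc r) * fact (Suc r) * fact (card A - Suc r)"
    by (simp add: algebra_simps)
  finally show ?case .
qed

lemma sum_card_Collect_swap:
  assumes "finite A" "finite B"
  shows "(\<Sum>a\<in>A. card {b\<in>B. R a b}) = (\<Sum>b\<in>B. card {a\<in>A. R a b})"
proof -
  have "(\<Sum>a\<in>A. card {b\<in>B. R a b}) = (\<Sum>a\<in>A. \<Sum>b\<in>B. of_bool (R a b))"
    using assms by (simp add: Int_def)
  also have "\<dots> = (\<Sum>b\<in>B. \<Sum>a\<in>A. of_bool (R a b))"
    by (rule sum.swap)
  also have "\<dots> = (\<Sum>b\<in>B. card {a\<in>A. R a b})"
    using assms by (simp add: Int_def)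
  finally show ?thesis .
qed

lemma inj_on_add_mod:
  fixes N :: nat
  shows "inj_on (\<lambda>x. (x + c) mod N) {..<N}"
proof (rule linorder_inj_onI')
  fix x y assume "x \<in> {..<N}" "y \<in> {..<N}" "x < y"
  show "(x + c) mod N \<noteq> (y + c) mod N"
  proof
    assume "(x + c) mod N = (y + c) mod N"
    then have "N dvd y - x"
      using mod_eq_dvd_iff_nat[of "x + c" "y + c" N] \<open>x < y\<close> by simp
    with \<open>x < y\<close> \<open>y \<in> {..<N}\<close> show False
      using nat_dvd_not_less[of "y - x" N] by auto
  qed
qed

lemma sum_shift_mod:
  fixes h :: "nat \<Rightarrow> nat \<Rightarrow> 'a::comm_monoid_add"
  shows "(\<Sum>sh<N. \<Sum>k<K. h ((k + sh) mod N) k) = (\<Sum>k<K. \<Sum>n<N. h n k)"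
proof -
  have "bij_betw (\<lambda>sh. (sh + k) mod N) {..<N} {..<N}" for k
  proof (rule bij_betw_imageI[OF inj_on_add_mod endo_inj_surj[OF _ _ inj_on_add_mod]])
    show "(\<lambda>sh. (sh + k) mod N) ` {..<N} \<subseteq> {..<N}" by auto
  qed simp
  then show ?thesis
    by (subst sum.swap) (intro sum.cong refl sum.reindex_bij_betw, simp add: add.commute)
qed

(* Receivers decode by increasing level: the part of a receiver's side information that lies in A
   consists of bits wanted by lower levels, so by induction the message alone determines W on A. *)
lemma acyclic_decoding_inj:
  fixes enc :: "(nat \<times> nat \<Rightarrow> bool) \<Rightarrow> 'm" and lv :: "nat \<Rightarrow> nat"
  assumes decode: "\<forall>k<K. \<forall>W. \<forall>j<F. dec k (enc W) (mask (Z k) W) j = W (d k, j)"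
    and acyclic: "\<forall>p\<in>A. \<exists>k<K. p = (d k, snd p) \<and> snd p < F \<and> (\<forall>k'<K. p \<in> Z k' \<longrightarrow> lv k < lv k')"
  shows "inj_on (\<lambda>X. enc (\<lambda>p. p \<in> X)) (Pow A)"
proof (rule inj_onI)
  fix X Y assume X: "X \<in> Pow A" and Y: "Y \<in> Pow A" and same: "enc (\<lambda>p. p \<in> X) = enc (\<lambda>p. p \<in> Y)"
  have agree: "(d k, j) \<in> X \<longleftrightarrow> (d k, j) \<in> Y" if "k < K" "j < F" for k j
    using that
  proof (induction "lv k" arbitrary: k j rule: less_induct)
    case less
    have "mask (Z k) (\<lambda>p. p \<in> X) = mask (Z k) (\<lambda>p. p \<in> Y)"
    proof
      fix p
      show "mask (Z k) (\<lambda>p. p \<in> X) p = mask (Z k) (\<lambda>p. p \<in> Y) p"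
      proof (cases "p \<in> Z k \<and> p \<in> A")
        case True
        then obtain k' where "k' < K" "p = (d k', snd p)" "snd p < F" "lv k' < lv k"
          using acyclic less.prems by blast
        then show ?thesis using less.hyps[of k' "snd p"] by (simp add: mask_def)
      qed (use X Y in \<open>auto simp: mask_def\<close>)
    qed
    then show ?case using decode less.prems same by metis
  qed
  show "X = Y"
  proof (intro set_eqI)
    fix p
    show "p \<in> X \<longleftrightarrow> p \<in> Y"
    proof (cases "p \<in> A")
      case True
      then obtain k where "k < K" "p = (d k, snd p)" "snd p < F" using acyclic by blast
      then show ?thesis using agree by metis
    qed (use X Y in auto)
  qed
qed

lemma acyclic_decoding_card_le:
  fixes enc :: "(nat \<times> nat \<Rightarrow> bool) \<Rightarrow> bool list" and lv :: "nat \<Rightarrow> nat"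
  assumes "\<forall>W. length (enc W) = B"
    and "\<forall>k<K. \<forall>W. \<forall>j<F. dec k (enc W) (mask (Z k) W) j = W (d k, j)"
    and "finite A"
    and "\<forall>p\<in>A. \<exists>k<K. p = (d k, snd p) \<and> snd p < F \<and> (\<forall>k'<K. p \<in> Z k' \<longrightarrow> lv k < lv k')"
  shows "card A \<le> B"
proof -
  let ?code = "\<lambda>X. enc (\<lambda>p. p \<in> X)"
  have "(2::nat) ^ card A = card (?code ` Pow A)"
    using acyclic_decoding_inj[OF assms(2,4)] \<open>finite A\<close> by (simp add: card_image card_Pow)
  also have "\<dots> \<le> card {xs. set xs \<subseteq> (UNIV :: bool set) \<and> length xs = B}"
    using assms(1) by (intro card_mono finite_lists_length_eq) auto
  also have "\<dots> = 2 ^ B"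
    using card_lists_length_eq[of "UNIV :: bool set" B] by simp
  finally show ?thesis by simp
qed

lemma distinct_demands_bound:
  fixes enc :: "(nat \<times> nat \<Rightarrow> bool) \<Rightarrow> bool list" and lv :: "nat \<Rightarrow> nat"
  assumes "\<forall>W. length (enc W) = B"
    and "\<forall>k<K. \<forall>W. \<forall>j<F. dec k (enc W) (mask (Z k) W) j = W (d k, j)"
    and "inj_on d {..<K}"
  shows "(\<Sum>k<K. card {j. j < F \<and> (\<forall>k'<K. lv k' \<le> lv k \<longrightarrow> (d k, j) \<notin> Z k')}) \<le> B"
proof -
  define J where "J k = {j. j < F \<and> (\<forall>k'<K. lv k' \<le> lv k \<longrightarrow> (d k, j) \<notin> Z k')}" for k
  define A where "A = (\<Union>k<K. Pair (d k) ` J k)"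
  have "card A = (\<Sum>k<K. card (Pair (d k) ` J k))"
    unfolding A_def using \<open>inj_on d {..<K}\<close>
    by (intro card_UN_disjoint) (auto simp: J_def inj_on_def)
  also have "\<dots> = (\<Sum>k<K. card (J k))"
    by (intro sum.cong refl card_image) (simp add: inj_on_def)
  finally have "card A = (\<Sum>k<K. card (J k))" .
  moreover have "card A \<le> B"
  proof (rule acyclic_decoding_card_le[OF assms(1,2)])
    show "finite A" by (auto simp: A_def J_def)
    show "\<forall>p\<in>A. \<exists>k<K. p = (d k, snd p) \<and> snd p < F \<and> (\<forall>k'<K. p \<in> Z k' \<longrightarrow> lv k < lv k')"
      by (fastforce simp: A_def J_def not_less)
  qed
  ultimately show ?thesis by (simp add: J_def)
qed

definition user_block :: "(nat \<Rightarrow> nat) \<Rightarrow> nat \<Rightarrow> nat" where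
  "user_block L k = (LEAST r. k < (\<Sum>q = 1..r. L q))"

lemma user_block_eq_iff:
  assumes "k < (\<Sum>q = 1..n. L q)" and "1 \<le> r"
  shows "user_block L k = r \<longleftrightarrow> (\<Sum>q = 1..r - 1. L q) \<le> k \<and> k < (\<Sum>q = 1..r. L q)"
proof
  assume r: "user_block L k = r"
  show "(\<Sum>q = 1..r - 1. L q) \<le> k \<and> k < (\<Sum>q = 1..r. L q)"
  proof
    show "k < (\<Sum>q = 1..r. L q)"
      using LeastI[of "\<lambda>r. k < (\<Sum>q = 1..r. L q)", OF assms(1)] r by (simp add: user_block_def)
    show "(\<Sum>q = 1..r - 1. L q) \<le> k"
      using not_less_Least[of "r - 1" "\<lambda>r. k < (\<Sum>q = 1..r. L q)"] r assms(2)
      by (simp add: user_block_def)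
  qed
next
  assume r: "(\<Sum>q = 1..r - 1. L q) \<le> k \<and> k < (\<Sum>q = 1..r. L q)"
  have "r \<le> y" if "k < (\<Sum>q = 1..y. L q)" for y
  proof (rule ccontr)
    assume "\<not> r \<le> y"
    then have "(\<Sum>q = 1..y. L q) \<le> (\<Sum>q = 1..r - 1. L q)" by (intro sum_mono2) auto
    with r that show False by simp
  qed
  with r show "user_block L k = r"
    unfolding user_block_def by (intro Least_equality) auto
qed

lemma user_block_bounds:
  assumes "k < (\<Sum>q = 1..n. L q)"
  shows "1 \<le> user_block L k" and "user_block L k \<le> n"
proof -
  show "user_block L k \<le> n"
    unfolding user_block_def by (rule Least_le) (rule assms)
  have "k < (\<Sum>q = 1..user_block L k. L q)"
    unfolding user_block_def by (rule LeastI) (rule assms)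
  then show "1 \<le> user_block L k" by (cases "user_block L k") auto
qed

lemma card_user_block:
  assumes "1 \<le> r" and "r \<le> n"
  shows "card {k. k < (\<Sum>q = 1..n. L q) \<and> user_block L k = r} = L r"
proof -
  have "(\<Sum>q = 1..r. L q) \<le> (\<Sum>q = 1..n. L q)"
    using assms by (intro sum_mono2) auto
  then have "k < (\<Sum>q = 1..n. L q) \<and> user_block L k = r
      \<longleftrightarrow> (\<Sum>q = 1..r - 1. L q) \<le> k \<and> k < (\<Sum>q = 1..r. L q)" for k
    using user_block_eq_iff[of k L n r] assms by (cases "k < (\<Sum>q = 1..n. L q)") auto
  then have "{k. k < (\<Sum>q = 1..n. L q) \<and> user_block L k = r} = {(\<Sum>q = 1..r - 1. L q)..<(\<Sum>q = 1..r. L q)}"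
    by (simp add: set_eq_iff)
  moreover have "(\<Sum>q = 1..r. L q) = (\<Sum>q = 1..r - 1. L q) + L r"
    using assms by (cases r) auto
  ultimately show ?thesis by simp
qed

lemma sum_by_user_block:
  fixes G :: "nat \<Rightarrow> nat"
  shows "(\<Sum>k < (\<Sum>q = 1..n. L q). G (user_block L k)) = (\<Sum>r = 1..n. L r * G r)"
proof -
  have "(\<Sum>k < (\<Sum>q = 1..n. L q). G (user_block L k))
      = (\<Sum>r = 1..n. \<Sum>k\<in>{k. k \<in> {..<(\<Sum>q = 1..n. L q)} \<and> user_block L k = r}. G (user_block L k))"
    by (rule sum.group[symmetric]) (use user_block_bounds in auto)
  also have "\<dots> = (\<Sum>r = 1..n. L r * G r)"
  proof (rule sum.cong)
    fix r assume "r \<in> {1..n}"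
    let ?users = "{k. k \<in> {..<(\<Sum>q = 1..n. L q)} \<and> user_block L k = r}"
    have "(\<Sum>k\<in>?users. G (user_block L k)) = (\<Sum>k\<in>?users. G r)"
      by (rule sum.cong) auto
    also have "\<dots> = L r * G r"
      using card_user_block[where n = n and L = L and r = r] \<open>r \<in> {1..n}\<close> by simp
    finally show "(\<Sum>k\<in>?users. G (user_block L k)) = L r * G r" .
  qed simp
  finally show ?thesis .
qed

lemma valid_assoc_of_perm:
  assumes "ps \<in> permutations_of_set {..<Lam}" and "(\<Sum>q = 1..Lam. L q) = K"
  shows "valid_assoc K Lam L (\<lambda>k. ps ! (user_block L k - 1))"
proof -
  have ps: "distinct ps" "set ps = {..<Lam}" "length ps = Lam"
    using assms(1) distinct_card[of ps] by (auto simp: permutations_of_set_def)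
  have "bij_betw ((!) ps) {..<Lam} {..<Lam}"
    using ps by (intro bij_betw_nth) auto
  moreover have "bij_betw (\<lambda>r. r - 1) {1..Lam} {..<Lam}"
    by (rule bij_betwI[where g = Suc]) auto
  ultimately have bij: "bij_betw (\<lambda>r. ps ! (r - 1)) {1..Lam} {..<Lam}"
    using bij_betw_trans by (auto simp: comp_def)
  have "card {k. k < K \<and> ps ! (user_block L k - 1) = ps ! (r - 1)} = L r" if r: "r \<in> {1..Lam}" for r
  proof -
    have "ps ! (user_block L k - 1) = ps ! (r - 1) \<longleftrightarrow> user_block L k = r" if "k < K" for k
      using user_block_bounds[where k = k and n = Lam and L = L] that r assms(2) ps nth_eq_iff_index_eq[of ps] by auto
    then have "{k. k < K \<and> ps ! (user_block L k - 1) = ps ! (r - 1)} = {k. k < K \<and> user_block L k = r}"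
      by auto
    then show ?thesis using card_user_block[where r = r and n = Lam and L = L] r assms(2) by simp
  qed
  moreover have "ps ! (user_block L k - 1) < Lam" if "k < K" for k
    using user_block_bounds[where k = k and n = Lam and L = L] that assms(2) ps nth_mem[of "user_block L k - 1" ps] by auto
  ultimately show ?thesis
    unfolding valid_assoc_def using bij by blast
qed

lemma perm_message_length_bound:
  fixes enc :: "(nat \<times> nat \<Rightarrow> bool) \<Rightarrow> bool list"
  assumes K: "(\<Sum>q = 1..Lam. L q) = K" and ps: "ps \<in> permutations_of_set {..<Lam}"
    and "\<forall>W. length (enc W) = B"
    and "\<forall>k<K. \<forall>W. \<forall>j<F. dec k (enc W) (mask (Z (ps ! (user_block L k - 1))) W) j = W (d k, j)"
    and "inj_on d {..<K}"
  shows "(\<Sum>k<K. card {j. j < F \<and> (\<forall>l\<in>set (take (user_block L k) ps). (d k, j) \<notin> Z l)}) \<le> B"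
proof -
  let ?Z = "\<lambda>k. Z (ps ! (user_block L k - 1))"
  have "length ps = Lam"
    using ps distinct_card[of ps] by (auto simp: permutations_of_set_def)
  have "ps ! (user_block L k' - 1) \<in> set (take (user_block L k) ps)"
    if "k' < K" "user_block L k' \<le> user_block L k" for k k'
  proof -
    have "user_block L k' - 1 < user_block L k" "user_block L k' - 1 < length ps"
      using that user_block_bounds[of k' L Lam] K \<open>length ps = Lam\<close> by auto
    then show ?thesis
      by (metis in_set_conv_nth length_take min_less_iff_conj nth_take)
  qed
  then have "card {j. j < F \<and> (\<forall>l\<in>set (take (user_block L k) ps). (d k, j) \<notin> Z l)}
      \<le> card {j. j < F \<and> (\<forall>k'<K. user_block L k' \<le> user_block L k \<longrightarrow> (d k, j) \<notin> ?Z k')}" for k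
    by (intro card_mono) auto
  then have "(\<Sum>k<K. card {j. j < F \<and> (\<forall>l\<in>set (take (user_block L k) ps). (d k, j) \<notin> Z l)})
      \<le> (\<Sum>k<K. card {j. j < F \<and> (\<forall>k'<K. user_block L k' \<le> user_block L k \<longrightarrow> (d k, j) \<notin> ?Z k')})"
    by (intro sum_mono)
  also have "\<dots> \<le> B"
    using assms(3-5) by (rule distinct_demands_bound)
  finally show ?thesis .
qed

(* Averaging over the N cyclic shifts of the distinct demands k + sh makes every user demand every
   file exactly once. *)
lemma perm_uncached_bound:
  fixes Z :: "nat \<Rightarrow> (nat \<times> nat) set"
    and enc :: "(nat \<Rightarrow> nat) \<Rightarrow> (nat \<Rightarrow> nat) \<Rightarrow> (nat \<times> nat \<Rightarrow> bool) \<Rightarrow> bool list"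
  assumes K: "(\<Sum>q = 1..Lam. L q) = K" and "K \<le> N"
    and ps: "ps \<in> permutations_of_set {..<Lam}"
    and scheme: "\<forall>a d. valid_assoc K Lam L a \<and> valid_demand N K d \<longrightarrow>
           (\<exists>B::nat. real B \<le> T * real F \<and> (\<forall>W. length (enc a d W) = B) \<and>
              (\<forall>k<K. \<forall>W. \<forall>j<F. dec a d k (enc a d W) (mask (Z (a k)) W) j = W (d k, j)))"
  shows "real (\<Sum>r = 1..Lam. L r * card {p \<in> {..<N} \<times> {..<F}. \<forall>l\<in>set (take r ps). p \<notin> Z l})
           \<le> real N * T * real F"
proof -
  define miss where "miss n r = card {j. j < F \<and> (\<forall>l\<in>set (take r ps). (n, j) \<notin> Z l)}" for n r
  have shift: "real (\<Sum>k<K. miss ((k + sh) mod N) (user_block L k)) \<le> T * real F" for sh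
  proof -
    define d where "d k = (k + sh) mod N" for k
    have "valid_demand N K d"
      using \<open>K \<le> N\<close> by (auto simp: valid_demand_def d_def)
    with scheme valid_assoc_of_perm[OF ps K] obtain B where B: "real B \<le> T * real F"
      "\<forall>W. length (enc (\<lambda>k. ps ! (user_block L k - 1)) d W) = B"
      "\<forall>k<K. \<forall>W. \<forall>j<F. dec (\<lambda>k. ps ! (user_block L k - 1)) d k (enc (\<lambda>k. ps ! (user_block L k - 1)) d W)
          (mask (Z (ps ! (user_block L k - 1))) W) j = W (d k, j)"
      by blast
    have "inj_on d {..<K}"
      unfolding d_def by (rule inj_on_subset[OF inj_on_add_mod]) (use \<open>K \<le> N\<close> in auto)
    with B(2,3) have "(\<Sum>k<K. miss (d k) (user_block L k)) \<le> B"
      unfolding miss_def by (rule perm_message_length_bound[OF K ps])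
    with B(1) show ?thesis
      unfolding d_def by linarith
  qed
  have "(\<Sum>sh<N. real (\<Sum>k<K. miss ((k + sh) mod N) (user_block L k))) \<le> (\<Sum>sh<N. T * real F)"
    by (rule sum_mono) (rule shift)
  then have "real (\<Sum>sh<N. \<Sum>k<K. miss ((k + sh) mod N) (user_block L k)) \<le> real N * (T * real F)"
    by simp
  moreover have "(\<Sum>sh<N. \<Sum>k<K. miss ((k + sh) mod N) (user_block L k))
      = (\<Sum>r = 1..Lam. L r * (\<Sum>n<N. miss n r))"
    using sum_shift_mod[where h = "\<lambda>n k. miss n (user_block L k)" and N = N and K = K]
      sum_by_user_block[of "\<lambda>r. \<Sum>n<N. miss n r" L Lam] K by simp
  moreover have "(\<Sum>n<N. miss n r) = card {p \<in> {..<N} \<times> {..<F}. \<forall>l\<in>set (take r ps). p \<notin> Z l}" for r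
  proof -
    have "{p \<in> {..<N} \<times> {..<F}. \<forall>l\<in>set (take r ps). p \<notin> Z l}
        = Sigma {..<N} (\<lambda>n. {j. j < F \<and> (\<forall>l\<in>set (take r ps). (n, j) \<notin> Z l)})"
      by auto
    then show ?thesis by (simp add: miss_def)
  qed
  ultimately show ?thesis by (simp add: mult.assoc)
qed

lemma sum_perms_prefix_eq_miss_load:
  fixes D :: "'p \<Rightarrow> nat set"
  assumes "finite U" and "\<forall>p\<in>U. D p \<subseteq> {..<Lam}"
  shows "real (\<Sum>ps\<in>permutations_of_set {..<Lam}. \<Sum>r = 1..Lam. L r * card {p\<in>U. set (take r ps) \<subseteq> D p})
           = fact Lam * (\<Sum>p\<in>U. miss_load Lam L (card (D p)))"
proof -
  let ?P = "permutations_of_set {..<Lam}"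
  have "(\<Sum>ps\<in>?P. \<Sum>r = 1..Lam. L r * card {p\<in>U. set (take r ps) \<subseteq> D p})
      = (\<Sum>r = 1..Lam. L r * (\<Sum>ps\<in>?P. card {p\<in>U. set (take r ps) \<subseteq> D p}))"
    by (subst sum.swap) (simp add: sum_distrib_left)
  also have "\<dots> = (\<Sum>r = 1..Lam. L r * (\<Sum>p\<in>U. card {ps\<in>?P. set (take r ps) \<subseteq> D p}))"
    by (intro sum.cong refl arg_cong2[where f = "(*)"] sum_card_Collect_swap finite_permutations_of_set \<open>finite U\<close>)
  also have "\<dots> = (\<Sum>r = 1..Lam. L r * (\<Sum>p\<in>U. (card (D p) choose r) * fact r * fact (Lam - r)))"
    using assms(2) by (intro sum.cong refl arg_cong2[where f = "(*)"]) (simp add: card_perms_with_prefix_in)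
  finally have "real (\<Sum>ps\<in>?P. \<Sum>r = 1..Lam. L r * card {p\<in>U. set (take r ps) \<subseteq> D p})
      = real (\<Sum>r = 1..Lam. L r * (\<Sum>p\<in>U. (card (D p) choose r) * fact r * fact (Lam - r)))"
    by (simp only:)
  also have "\<dots> = (\<Sum>r = 1..Lam. \<Sum>p\<in>U. real (L r) * real (card (D p) choose r) * (fact r * fact (Lam - r)))"
    unfolding of_nat_sum of_nat_mult of_nat_fact sum_distrib_left by (simp only: mult.assoc)
  also have "\<dots> = (\<Sum>r = 1..Lam. \<Sum>p\<in>U. fact Lam * (real (L r) * real (card (D p) choose r) / real (Lam choose r)))"
    by (intro sum.cong refl) (simp add: binomial_fact)
  also have "\<dots> = fact Lam * (\<Sum>p\<in>U. miss_load Lam L (card (D p)))"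
    unfolding miss_load_def sum_distrib_left by (rule sum.swap)
  finally show ?thesis .
qed

lemma sum_card_uncaching:
  assumes "finite U" and "\<forall>l<Lam. Z l \<subseteq> U"
  shows "(\<Sum>p\<in>U. card {l\<in>{..<Lam}. p \<notin> Z l}) + (\<Sum>l<Lam. card (Z l)) = Lam * card U"
proof -
  have "(\<Sum>l<Lam. card (Z l)) = (\<Sum>l<Lam. card {p\<in>U. p \<in> Z l})"
    using assms(2) by (intro sum.cong refl arg_cong[where f = card]) auto
  also have "\<dots> = (\<Sum>p\<in>U. card {l\<in>{..<Lam}. p \<in> Z l})"
    using sum_card_Collect_swap[OF \<open>finite U\<close>, of "{..<Lam}"] by simp
  finally have "(\<Sum>p\<in>U. card {l\<in>{..<Lam}. p \<notin> Z l}) + (\<Sum>l<Lam. card (Z l))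
      = (\<Sum>p\<in>U. card {l\<in>{..<Lam}. p \<notin> Z l} + card {l\<in>{..<Lam}. p \<in> Z l})"
    by (simp add: sum.distrib)
  also have "\<dots> = (\<Sum>p\<in>U. Lam)"
  proof (rule sum.cong)
    fix p
    have "card {l\<in>{..<Lam}. p \<notin> Z l} + card {l\<in>{..<Lam}. p \<in> Z l}
        = card ({l\<in>{..<Lam}. p \<notin> Z l} \<union> {l\<in>{..<Lam}. p \<in> Z l})"
      by (rule card_Un_disjoint[symmetric]) auto
    also have "{l\<in>{..<Lam}. p \<notin> Z l} \<union> {l\<in>{..<Lam}. p \<in> Z l} = {..<Lam}"
      by auto
    finally show "card {l\<in>{..<Lam}. p \<notin> Z l} + card {l\<in>{..<Lam}. p \<in> Z l} = Lam"
      by simp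
  qed simp
  finally show ?thesis by simp
qed

lemma sum_miss_load_le_load:
  fixes Z :: "nat \<Rightarrow> (nat \<times> nat) set"
    and enc :: "(nat \<Rightarrow> nat) \<Rightarrow> (nat \<Rightarrow> nat) \<Rightarrow> (nat \<times> nat \<Rightarrow> bool) \<Rightarrow> bool list"
  assumes K: "(\<Sum>q = 1..Lam. L q) = K" and "K \<le> N"
    and scheme: "\<forall>a d. valid_assoc K Lam L a \<and> valid_demand N K d \<longrightarrow>
           (\<exists>B::nat. real B \<le> T * real F \<and> (\<forall>W. length (enc a d W) = B) \<and>
              (\<forall>k<K. \<forall>W. \<forall>j<F. dec a d k (enc a d W) (mask (Z (a k)) W) j = W (d k, j)))"
  shows "(\<Sum>p\<in>{..<N} \<times> {..<F}. miss_load Lam L (card {l\<in>{..<Lam}. p \<notin> Z l})) \<le> real N * T * real F"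
proof -
  let ?U = "{..<N} \<times> {..<F}" and ?D = "\<lambda>p. {l\<in>{..<Lam}. p \<notin> Z l}"
  have prefix_iff: "set (take r ps) \<subseteq> ?D p \<longleftrightarrow> (\<forall>l\<in>set (take r ps). p \<notin> Z l)"
    if "ps \<in> permutations_of_set {..<Lam}" for ps r p
    using that set_take_subset[of r ps] by (auto simp: permutations_of_set_def)
  have "fact Lam * (\<Sum>p\<in>?U. miss_load Lam L (card (?D p)))
      = real (\<Sum>ps\<in>permutations_of_set {..<Lam}. \<Sum>r = 1..Lam. L r * card {p\<in>?U. set (take r ps) \<subseteq> ?D p})"
    by (rule sum_perms_prefix_eq_miss_load[symmetric]) auto
  also have "\<dots> \<le> (\<Sum>ps\<in>permutations_of_set {..<Lam}. real N * T * real F)"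
    unfolding of_nat_sum
    using perm_uncached_bound[OF K \<open>K \<le> N\<close> _ scheme] prefix_iff by (intro sum_mono) simp
  also have "\<dots> = fact Lam * (real N * T * real F)"
    by simp
  finally show ?thesis
    by simp
qed

lemma sum_card_uncaching_ge:
  assumes "0 < Lam" and "t \<le> Lam"
    and cap: "\<forall>l<Lam. Z l \<subseteq> {..<N} \<times> {..<F} \<and> real (card (Z l)) \<le> real t / real Lam * real N * real F"
  shows "real (Lam - t) * real (N * F) \<le> (\<Sum>p\<in>{..<N} \<times> {..<F}. real (card {l\<in>{..<Lam}. p \<notin> Z l}))"
proof -
  have "real (\<Sum>l<Lam. card (Z l)) \<le> (\<Sum>l<Lam. real t / real Lam * real N * real F)"
    unfolding of_nat_sum using cap by (intro sum_mono) auto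
  then have "real (\<Sum>l<Lam. card (Z l)) \<le> real t * real (N * F)"
    using \<open>0 < Lam\<close> by simp
  moreover have "(\<Sum>p\<in>{..<N} \<times> {..<F}. card {l\<in>{..<Lam}. p \<notin> Z l}) + (\<Sum>l<Lam. card (Z l)) = Lam * (N * F)"
    using sum_card_uncaching[of "{..<N} \<times> {..<F}" Lam Z] cap by simp
  ultimately show ?thesis
    using \<open>t \<le> Lam\<close> by (simp add: of_nat_diff algebra_simps flip: of_nat_sum of_nat_add of_nat_mult)
qed

lemma achievable_imp_f_profile_le:
  assumes "0 < Lam" and "Lam \<le> K" and "K \<le> N" and K: "(\<Sum>r = 1..Lam. L r) = K" and "t \<le> Lam"
    and "achievable N K Lam (real t / real Lam * real N) L T"
  shows "f_profile Lam L t \<le> T"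
proof -
  obtain F Z enc dec where "F > 0"
    and cap: "\<forall>l<Lam. Z l \<subseteq> {..<N} \<times> {..<F} \<and> real (card (Z l)) \<le> real t / real Lam * real N * real F"
    and scheme: "\<forall>a d. valid_assoc K Lam L a \<and> valid_demand N K d \<longrightarrow>
           (\<exists>B::nat. real B \<le> T * real F \<and> (\<forall>W. length (enc a d W :: bool list) = B) \<and>
              (\<forall>k<K. \<forall>W. \<forall>j<F. dec a d k (enc a d W) (mask (Z (a k)) W) j = W (d k, j)))"
    using assms(6) unfolding achievable_def by blast
  let ?U = "{..<N} \<times> {..<F}" and ?D = "\<lambda>p. card {l\<in>{..<Lam}. p \<notin> Z l}"
  have "0 < N" "card ?U = N * F"
    using assms(1-3) by simp_all
  have "real (Lam - t) \<le> (\<Sum>p\<in>?U. real (?D p)) / real (N * F)"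
    using sum_card_uncaching_ge[OF \<open>0 < Lam\<close> \<open>t \<le> Lam\<close> cap] \<open>0 < N\<close> \<open>F > 0\<close>
    by (simp add: pos_le_divide_eq)
  then have "miss_load Lam L (Lam - t) \<le> (\<Sum>p\<in>?U. 1 / real (N * F) * miss_load Lam L (?D p))"
    using \<open>card ?U = N * F\<close> \<open>0 < N\<close> \<open>F > 0\<close>
    by (intro convex_mono_seq_Jensen[OF mono_miss_load convex_miss_load]) (auto simp: sum_divide_distrib)
  also have "\<dots> = (\<Sum>p\<in>?U. miss_load Lam L (?D p)) / real (N * F)"
    by (simp add: sum_divide_distrib)
  also have "\<dots> \<le> T"
    using sum_miss_load_le_load[OF K \<open>K \<le> N\<close> scheme] \<open>0 < N\<close> \<open>F > 0\<close>
    by (simp add: pos_divide_le_eq mult_ac)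
  finally show ?thesis
    using f_profile_eq_miss_load[OF \<open>t \<le> Lam\<close>] by simp
qed
section \<open>The achievable scheme\<close>

lemma card_subsets_containing:
  assumes "finite A" and "l \<in> A" and "1 \<le> t"
  shows "card {S. S \<subseteq> A \<and> card S = t \<and> l \<in> S} = (card A - 1) choose (t - 1)"
proof -
  let ?X = "{S. S \<subseteq> A \<and> card S = t \<and> l \<in> S}" and ?Y = "{S. S \<subseteq> A - {l} \<and> card S = t}"
  have "finite ?X" "finite ?Y"
    using \<open>finite A\<close> by (auto intro: finite_subset[of _ "Pow A"])
  have "card A choose t = card {S. S \<subseteq> A \<and> card S = t}"
    using n_subsets[OF \<open>finite A\<close>] by simp
  also have "{S. S \<subseteq> A \<and> card S = t} = ?X \<union> ?Y"
    by auto
  also have "card (?X \<union> ?Y) = card ?X + card ?Y"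
    using \<open>finite ?X\<close> \<open>finite ?Y\<close> by (intro card_Un_disjoint) auto
  also have "card ?Y = card A - 1 choose t"
    using n_subsets[of "A - {l}" t] assms by simp
  finally have "card A choose t = card ?X + (card A - 1 choose t)" .
  moreover have "card A choose t = (card A - 1 choose (t - 1)) + (card A - 1 choose t)"
    using assms by (intro choose_reduce_nat) (auto simp: card_gt_0_iff)
  ultimately show ?thesis by simp
qed

definition slot :: "(nat \<Rightarrow> nat) \<Rightarrow> nat \<Rightarrow> nat" where
  "slot a k = card {k'. k' < k \<and> a k' = a k}"

lemma slot_less_card:
  assumes "k < K"
  shows "slot a k < card {k'. k' < K \<and> a k' = a k}"
  unfolding slot_def using assms by (intro psubset_card_mono) auto

lemma slot_strict_mono:
  assumes "k1 < k2" and "a k1 = a k2"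
  shows "slot a k1 < slot a k2"
  unfolding slot_def using assms by (intro psubset_card_mono) auto

lemma slot_inj:
  assumes "a k1 = a k2" and "slot a k1 = slot a k2"
  shows "k1 = k2"
  using slot_strict_mono[of k1 k2 a] slot_strict_mono[of k2 k1 a] assms
  by (cases k1 k2 rule: linorder_cases) auto

lemma slot_surj:
  assumes "j < card {k. k < K \<and> a k = c}"
  obtains k where "k < K" "a k = c" "slot a k = j"
proof -
  let ?U = "{k. k < K \<and> a k = c}"
  have "inj_on (slot a) ?U"
    by (rule inj_onI) (metis (mono_tags, lifting) mem_Collect_eq slot_inj)
  moreover have "slot a ` ?U \<subseteq> {..<card ?U}"
    using slot_less_card by fastforce
  ultimately have "slot a ` ?U = {..<card ?U}"
    by (intro card_subset_eq) (auto simp: card_image)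
  then have "j \<in> slot a ` ?U"
    using assms by simp
  with that show ?thesis by blast
qed

(* valid_assoc only asserts that some ranking of the caches exists under which the cache of rank r
   serves L r users; cache_rank fixes one. *)
definition cache_rank :: "nat \<Rightarrow> nat \<Rightarrow> (nat \<Rightarrow> nat) \<Rightarrow> (nat \<Rightarrow> nat) \<Rightarrow> nat \<Rightarrow> nat" where
  "cache_rank K Lam L a = (SOME \<rho>. bij_betw \<rho> {..<Lam} {1..Lam} \<and>
     (\<forall>l<Lam. card {k. k < K \<and> a k = l} = L (\<rho> l)))"

lemma cache_rank:
  assumes "valid_assoc K Lam L a"
  shows "bij_betw (cache_rank K Lam L a) {..<Lam} {1..Lam}"
    and "l < Lam \<Longrightarrow> card {k. k < K \<and> a k = l} = L (cache_rank K Lam L a l)"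
proof -
  obtain \<sigma> where \<sigma>: "bij_betw \<sigma> {1..Lam} {..<Lam}" "\<forall>r\<in>{1..Lam}. card {k. k < K \<and> a k = \<sigma> r} = L r"
    using assms unfolding valid_assoc_def by blast
  let ?\<rho> = "inv_into {1..Lam} \<sigma>"
  have "bij_betw ?\<rho> {..<Lam} {1..Lam}"
    by (rule bij_betw_inv_into[OF \<sigma>(1)])
  moreover have "card {k. k < K \<and> a k = l} = L (?\<rho> l)" if "l < Lam" for l
  proof -
    have "?\<rho> l \<in> {1..Lam}" "\<sigma> (?\<rho> l) = l"
      using that bij_betwE[OF bij_betw_inv_into[OF \<sigma>(1)]] bij_betw_inv_into_right[OF \<sigma>(1)] by auto
    then show ?thesis using \<sigma>(2) by metis
  qed
  ultimately have "bij_betw ?\<rho> {..<Lam} {1..Lam} \<and> (\<forall>l<Lam. card {k. k < K \<and> a k = l} = L (?\<rho> l))"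
    by blast
  then have "bij_betw (cache_rank K Lam L a) {..<Lam} {1..Lam} \<and>
      (\<forall>l<Lam. card {k. k < K \<and> a k = l} = L (cache_rank K Lam L a l))"
    unfolding cache_rank_def
    using someI_ex[of "\<lambda>\<rho>. bij_betw \<rho> {..<Lam} {1..Lam} \<and> (\<forall>l<Lam. card {k. k < K \<and> a k = l} = L (\<rho> l))"]
    by blast
  then show "bij_betw (cache_rank K Lam L a) {..<Lam} {1..Lam}"
    and "l < Lam \<Longrightarrow> card {k. k < K \<and> a k = l} = L (cache_rank K Lam L a l)"
    by auto
qed

lemma sum_users_by_cache_rank:
  fixes h :: "nat \<Rightarrow> nat"
  assumes "valid_assoc K Lam L a"
  shows "(\<Sum>k<K. h (cache_rank K Lam L a (a k))) = (\<Sum>r = 1..Lam. L r * h r)"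
proof -
  let ?\<rho> = "cache_rank K Lam L a"
  have a: "a k < Lam" if "k < K" for k
    using assms that by (simp add: valid_assoc_def)
  have "(\<Sum>k<K. h (?\<rho> (a k))) = (\<Sum>r = 1..Lam. \<Sum>k\<in>{k. k \<in> {..<K} \<and> ?\<rho> (a k) = r}. h (?\<rho> (a k)))"
    by (rule sum.group[symmetric]) (use a bij_betwE[OF cache_rank(1)[OF assms]] in auto)
  also have "\<dots> = (\<Sum>r = 1..Lam. L r * h r)"
  proof (rule sum.cong)
    fix r assume "r \<in> {1..Lam}"
    then obtain l where l: "l < Lam" "?\<rho> l = r"
      using bij_betw_imp_surj_on[OF cache_rank(1)[OF assms]] by (metis imageE lessThan_iff)
    have "{k. k \<in> {..<K} \<and> ?\<rho> (a k) = r} = {k. k < K \<and> a k = l}"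
      using l a bij_betw_imp_inj_on[OF cache_rank(1)[OF assms]] by (auto simp: inj_on_def)
    then show "(\<Sum>k\<in>{k. k \<in> {..<K} \<and> ?\<rho> (a k) = r}. h (?\<rho> (a k))) = L r * h r"
      using cache_rank(2)[OF assms l(1)] l by simp
  qed simp
  finally show ?thesis .
qed

lemma profile_antimono:
  fixes L :: "nat \<Rightarrow> nat"
  assumes "\<forall>r. 1 \<le> r \<and> r < Lam \<longrightarrow> L (Suc r) \<le> L r" and "1 \<le> r1" "r1 \<le> r2" "r2 \<le> Lam"
  shows "L r2 \<le> L r1"
  using assms(3,4)
proof (induction rule: dec_induct)
  case (step r)
  then have "L (Suc r) \<le> L r"
    using assms(1,2) by simp
  with step show ?case by simp
qed simp

lemma odd_card_filter_remove:
  assumes "finite V" and "k \<in> V"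
  shows "odd (card {x\<in>V. f x}) \<longleftrightarrow> (f k \<noteq> odd (card {x\<in>V - {k}. f x}))"
proof (cases "f k")
  case True
  then have "{x\<in>V. f x} = insert k {x\<in>V - {k}. f x}" using assms by auto
  then show ?thesis using True \<open>finite V\<close> by simp
next
  case False
  then have "{x\<in>V. f x} = {x\<in>V - {k}. f x}" using assms by auto
  then show ?thesis using False by simp
qed

lemma f_profile_mult_choose:
  assumes "t \<le> Lam"
  shows "f_profile Lam L t * real (Lam choose t) = real (\<Sum>r = 1..Lam. L r * ((Lam - r) choose t))"
proof -
  have "(\<Sum>r = 1..Lam - t. real (L r) * real ((Lam - r) choose t))
      = (\<Sum>r = 1..Lam. real (L r) * real ((Lam - r) choose t))"
    by (rule sum.mono_neutral_left) auto
  then show ?thesis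
    using assms by (simp add: f_profile_def)
qed

(* Subfile b of every file is cached at the caches in g b. For a (t+1)-set Q of caches, each user
   in a given slot whose cache lies in Q misses exactly the subfile Q - {own cache} of its demand,
   and all other such users have it cached; the XOR of these subfiles is broadcast once, labelled
   by the user of lowest cache rank (the leader). *)
locale shared_cache_delivery =
  fixes N K Lam t :: nat and L :: "nat \<Rightarrow> nat" and g :: "nat \<Rightarrow> nat set"
  assumes subfile_enum: "bij_betw g {..<Lam choose t} {S. S \<subseteq> {..<Lam} \<and> card S = t}"
begin

definition subfile_index :: "nat set \<Rightarrow> nat" where
  "subfile_index = the_inv_into {..<Lam choose t} g"

lemma subfile:
  assumes "b < Lam choose t"
  shows "g b \<subseteq> {..<Lam}" and "card (g b) = t" and "subfile_index (g b) = b"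
proof -
  have "g b \<in> {S. S \<subseteq> {..<Lam} \<and> card S = t}"
    using bij_betwE[OF subfile_enum] assms by blast
  then show "g b \<subseteq> {..<Lam}" and "card (g b) = t" by auto
  show "subfile_index (g b) = b"
    unfolding subfile_index_def using assms by (intro the_inv_into_f_f bij_betw_imp_inj_on[OF subfile_enum]) auto
qed

lemma subfile_index:
  assumes "S \<subseteq> {..<Lam}" and "card S = t"
  shows "subfile_index S < Lam choose t" and "g (subfile_index S) = S"
proof -
  have S: "S \<in> {S. S \<subseteq> {..<Lam} \<and> card S = t}"
    using assms by simp
  show "subfile_index S < Lam choose t"
    unfolding subfile_index_def using bij_betwE[OF bij_betw_the_inv_into[OF subfile_enum]] S by blast
  show "g (subfile_index S) = S"
    unfolding subfile_index_def using f_the_inv_into_f_bij_betw[OF subfile_enum] S by blast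
qed

lemma card_subfiles:
  "card {b. b < Lam choose t \<and> P (g b)} = card {S. S \<subseteq> {..<Lam} \<and> card S = t \<and> P S}"
proof -
  have "{S. S \<subseteq> {..<Lam} \<and> card S = t \<and> P S} = g ` {b. b < Lam choose t \<and> P (g b)}"
  proof (intro equalityI subsetI)
    fix S assume "S \<in> {S. S \<subseteq> {..<Lam} \<and> card S = t \<and> P S}"
    then show "S \<in> g ` {b. b < Lam choose t \<and> P (g b)}"
      using subfile_index[of S] by (intro image_eqI[where x = "subfile_index S"]) auto
  qed (use subfile in auto)
  moreover have "inj_on g {b. b < Lam choose t \<and> P (g b)}"
    using bij_betw_imp_inj_on[OF subfile_enum] by (rule inj_on_subset) auto
  ultimately show ?thesis by (simp add: card_image)
qed

definition placement :: "nat \<Rightarrow> (nat \<times> nat) set" where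
  "placement l = {(n, b). n < N \<and> b < Lam choose t \<and> l \<in> g b}"

lemma card_placement:
  assumes "l < Lam" and "1 \<le> t"
  shows "real (card (placement l)) = real t / real Lam * real N * real (Lam choose t)"
proof -
  have "placement l = {..<N} \<times> {b. b < Lam choose t \<and> l \<in> g b}"
    by (auto simp: placement_def)
  then have "card (placement l) = N * ((Lam - 1) choose (t - 1))"
    using card_subsets_containing[of "{..<Lam}" l t] assms by (simp add: card_subfiles)
  moreover have "Lam * ((Lam - 1) choose (t - 1)) = t * (Lam choose t)"
    using times_binomial_minus1_eq[of t Lam] assms by simp
  then have "real Lam * real ((Lam - 1) choose (t - 1)) = real t * real (Lam choose t)"
    by (metis of_nat_mult)
  then have "real ((Lam - 1) choose (t - 1)) = real t * real (Lam choose t) / real Lam"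
    using assms by (simp add: field_simps)
  ultimately show ?thesis
    by simp
qed

abbreviation rank :: "(nat \<Rightarrow> nat) \<Rightarrow> nat \<Rightarrow> nat" where
  "rank a \<equiv> cache_rank K Lam L a"

definition leaders :: "(nat \<Rightarrow> nat) \<Rightarrow> (nat \<times> nat) set" where
  "leaders a = {(k, b). k < K \<and> b < Lam choose t \<and> (\<forall>\<mu>\<in>g b. rank a (a k) < rank a \<mu>)}"

definition peers :: "(nat \<Rightarrow> nat) \<Rightarrow> nat \<Rightarrow> nat set \<Rightarrow> nat set" where
  "peers a k Q = {k'. k' < K \<and> slot a k' = slot a k \<and> a k' \<in> Q}"

definition coded_bit :: "(nat \<Rightarrow> nat) \<Rightarrow> (nat \<Rightarrow> nat) \<Rightarrow> (nat \<times> nat \<Rightarrow> bool) \<Rightarrow> nat \<Rightarrow> nat set \<Rightarrow> bool" where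
  "coded_bit a d W k Q = odd (card {k'\<in>peers a k Q. W (d k', subfile_index (Q - {a k'}))})"

definition delivery :: "(nat \<Rightarrow> nat) \<Rightarrow> (nat \<Rightarrow> nat) \<Rightarrow> (nat \<times> nat \<Rightarrow> bool) \<Rightarrow> bool list" where
  "delivery a d W = map (\<lambda>(k, b). coded_bit a d W k (insert (a k) (g b))) (sorted_list_of_set (leaders a))"

definition leader :: "(nat \<Rightarrow> nat) \<Rightarrow> nat \<Rightarrow> nat set \<Rightarrow> nat" where
  "leader a k Q = arg_min (\<lambda>k'. rank a (a k')) (\<lambda>k'. k' \<in> peers a k Q)"

definition position :: "(nat \<Rightarrow> nat) \<Rightarrow> nat \<times> nat \<Rightarrow> nat" where
  "position a = the_inv_into {..<card (leaders a)} ((!) (sorted_list_of_set (leaders a)))"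

definition decoder :: "(nat \<Rightarrow> nat) \<Rightarrow> (nat \<Rightarrow> nat) \<Rightarrow> nat \<Rightarrow> bool list \<Rightarrow> (nat \<times> nat \<Rightarrow> bool) \<Rightarrow> nat \<Rightarrow> bool" where
  "decoder a d k msg cache j =
     (if a k \<in> g j then cache (d k, j)
      else let Q = insert (a k) (g j); k0 = leader a k Q in
        msg ! position a (k0, subfile_index (Q - {a k0}))
          \<noteq> odd (card {k'\<in>peers a k Q - {k}. cache (d k', subfile_index (Q - {a k'}))}))"

lemma finite_leaders: "finite (leaders a)"
  by (rule finite_subset[of _ "{..<K} \<times> {..<Lam choose t}"]) (auto simp: leaders_def)

lemma length_delivery: "length (delivery a d W) = card (leaders a)"
  by (simp add: delivery_def finite_leaders)

lemma delivery_at_position: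
  assumes "(k, b) \<in> leaders a"
  shows "delivery a d W ! position a (k, b) = coded_bit a d W k (insert (a k) (g b))"
proof -
  let ?xs = "sorted_list_of_set (leaders a)"
  have bij: "bij_betw ((!) ?xs) {..<card (leaders a)} (leaders a)"
    using finite_leaders by (intro bij_betw_nth) auto
  have "position a (k, b) \<in> {..<card (leaders a)}"
    unfolding position_def by (rule bij_betw_apply[OF bij_betw_the_inv_into[OF bij] assms])
  moreover have "?xs ! position a (k, b) = (k, b)"
    unfolding position_def by (rule f_the_inv_into_f_bij_betw[OF bij]) (rule assms)
  ultimately show ?thesis
    using finite_leaders by (simp add: delivery_def)
qed

lemma card_subfiles_above_rank:
  assumes "valid_assoc K Lam L a" and "l < Lam"
  shows "card {b. b < Lam choose t \<and> (\<forall>\<mu>\<in>g b. rank a l < rank a \<mu>)} = (Lam - rank a l) choose t"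
proof -
  define H where "H = {\<mu>. \<mu> < Lam \<and> rank a l < rank a \<mu>}"
  have bij: "bij_betw (rank a) {..<Lam} {1..Lam}"
    by (rule cache_rank(1)[OF assms(1)])
  have "rank a ` H = {rank a l<..Lam}"
  proof (intro equalityI subsetI)
    fix r assume "r \<in> {rank a l<..Lam}"
    then have "r \<in> rank a ` {..<Lam}"
      using bij_betw_imp_surj_on[OF bij] by auto
    with \<open>r \<in> {rank a l<..Lam}\<close> show "r \<in> rank a ` H"
      by (auto simp: H_def)
  qed (use bij_betwE[OF bij] in \<open>auto simp: H_def\<close>)
  moreover have "inj_on (rank a) H"
    using bij_betw_imp_inj_on[OF bij] by (rule inj_on_subset) (auto simp: H_def)
  ultimately have "card H = Lam - rank a l"
    by (metis card_greaterThanAtMost card_image)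
  have "card {b. b < Lam choose t \<and> (\<forall>\<mu>\<in>g b. rank a l < rank a \<mu>)}
      = card {S. S \<subseteq> {..<Lam} \<and> card S = t \<and> (\<forall>\<mu>\<in>S. rank a l < rank a \<mu>)}"
    by (rule card_subfiles)
  also have "{S. S \<subseteq> {..<Lam} \<and> card S = t \<and> (\<forall>\<mu>\<in>S. rank a l < rank a \<mu>)} = {S. S \<subseteq> H \<and> card S = t}"
    by (auto simp: H_def)
  also have "card \<dots> = card H choose t"
    by (rule n_subsets) (simp add: H_def)
  finally show ?thesis
    using \<open>card H = Lam - rank a l\<close> by simp
qed

lemma card_leaders:
  assumes "valid_assoc K Lam L a"
  shows "card (leaders a) = (\<Sum>r = 1..Lam. L r * ((Lam - r) choose t))"
proof -
  have "leaders a = Sigma {..<K} (\<lambda>k. {b. b < Lam choose t \<and> (\<forall>\<mu>\<in>g b. rank a (a k) < rank a \<mu>)})"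
    by (auto simp: leaders_def)
  moreover have "a k < Lam" if "k < K" for k
    using assms that by (simp add: valid_assoc_def)
  ultimately have "card (leaders a) = (\<Sum>k<K. (Lam - rank a (a k)) choose t)"
    by (simp add: card_subfiles_above_rank[OF assms])
  also have "\<dots> = (\<Sum>r = 1..Lam. L r * ((Lam - r) choose t))"
    by (rule sum_users_by_cache_rank[OF assms])
  finally show ?thesis .
qed

lemma leader:
  assumes "k < K" and "a k \<in> Q"
  shows "leader a k Q \<in> peers a k Q"
    and "k' \<in> peers a k Q \<Longrightarrow> rank a (a (leader a k Q)) \<le> rank a (a k')"
  using arg_min_nat_lemma[of "\<lambda>k'. k' \<in> peers a k Q" k "\<lambda>k'. rank a (a k')"] assms
  unfolding leader_def peers_def by auto

(* A cache of Q of lower rank than the leader's serves at least as many users, since the profile is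
   nonincreasing, hence a user in the leader's slot, which would be a peer of lower rank. *)
lemma leader_rank_less:
  assumes valid: "valid_assoc K Lam L a" and mono: "\<forall>r. 1 \<le> r \<and> r < Lam \<longrightarrow> L (Suc r) \<le> L r"
    and "k < K" and "a k \<in> Q" and "Q \<subseteq> {..<Lam}"
    and "\<mu> \<in> Q" and "\<mu> \<noteq> a (leader a k Q)"
  shows "rank a (a (leader a k Q)) < rank a \<mu>"
proof (rule ccontr)
  define k0 where "k0 = leader a k Q"
  have k0: "k0 < K" "slot a k0 = slot a k" "a k0 \<in> Q"
    using leader(1)[where a = a and k = k and Q = Q, OF assms(3,4)] by (simp_all add: k0_def peers_def)
  have bij: "bij_betw (rank a) {..<Lam} {1..Lam}"
    by (rule cache_rank(1)[OF valid])
  have "a k0 < Lam" "\<mu> < Lam"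
    using k0 assms(5,6) by auto
  assume "\<not> rank a (a (leader a k Q)) < rank a \<mu>"
  moreover have "rank a \<mu> \<noteq> rank a (a k0)"
    using bij_betw_imp_inj_on[OF bij] \<open>a k0 < Lam\<close> \<open>\<mu> < Lam\<close> assms(7) by (auto simp: k0_def inj_on_def)
  ultimately have less: "rank a \<mu> < rank a (a k0)"
    by (simp add: k0_def)
  have "slot a k0 < card {k'. k' < K \<and> a k' = a k0}"
    by (rule slot_less_card[OF k0(1)])
  also have "\<dots> = L (rank a (a k0))"
    by (rule cache_rank(2)[OF valid \<open>a k0 < Lam\<close>])
  also have "\<dots> \<le> L (rank a \<mu>)"
    using profile_antimono[OF mono] less bij_betwE[OF bij] \<open>a k0 < Lam\<close> \<open>\<mu> < Lam\<close> by simp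
  also have "\<dots> = card {k'. k' < K \<and> a k' = \<mu>}"
    by (rule cache_rank(2)[OF valid \<open>\<mu> < Lam\<close>, symmetric])
  finally obtain k' where k': "k' < K" "a k' = \<mu>" "slot a k' = slot a k0"
    by (rule slot_surj)
  then have "k' \<in> peers a k Q"
    using k0 assms(6) by (simp add: peers_def)
  then have "rank a (a k0) \<le> rank a (a k')"
    using leader(2)[where a = a and k = k and Q = Q, OF assms(3,4)] by (simp add: k0_def)
  with less k' show False by simp
qed

lemma leader_in_leaders:
  assumes "valid_assoc K Lam L a" and "\<forall>r. 1 \<le> r \<and> r < Lam \<longrightarrow> L (Suc r) \<le> L r"
    and "k < K" and "a k \<in> Q" and "Q \<subseteq> {..<Lam}" and "card Q = Suc t"
  shows "(leader a k Q, subfile_index (Q - {a (leader a k Q)})) \<in> leaders a"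
proof -
  let ?k0 = "leader a k Q"
  have k0: "?k0 < K" "a ?k0 \<in> Q"
    using leader(1)[where a = a and k = k and Q = Q, OF assms(3,4)] by (simp_all add: peers_def)
  have "finite Q"
    using assms(5) finite_subset by blast
  then have "Q - {a ?k0} \<subseteq> {..<Lam}" "card (Q - {a ?k0}) = t"
    using assms(5,6) k0(2) by auto
  then show ?thesis
    using subfile_index[of "Q - {a ?k0}"] leader_rank_less[OF assms(1-5)] k0(1)
    by (auto simp: leaders_def)
qed

lemma delivery_at_leader:
  assumes "valid_assoc K Lam L a" and "\<forall>r. 1 \<le> r \<and> r < Lam \<longrightarrow> L (Suc r) \<le> L r"
    and "k < K" and "a k \<in> Q" and "Q \<subseteq> {..<Lam}" and "card Q = Suc t"
  shows "delivery a d W ! position a (leader a k Q, subfile_index (Q - {a (leader a k Q)})) = coded_bit a d W k Q"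
proof -
  let ?k0 = "leader a k Q"
  have "?k0 \<in> peers a k Q"
    by (rule leader(1)[where a = a and k = k and Q = Q, OF assms(3,4)])
  then have "peers a ?k0 Q = peers a k Q" and "a ?k0 \<in> Q"
    by (auto simp: peers_def)
  moreover have "finite Q"
    using assms(5) finite_subset by blast
  then have "g (subfile_index (Q - {a ?k0})) = Q - {a ?k0}"
    using subfile_index(2)[of "Q - {a ?k0}"] assms(5,6) \<open>a ?k0 \<in> Q\<close> by auto
  ultimately show ?thesis
    using delivery_at_position[OF leader_in_leaders[OF assms]] by (simp add: coded_bit_def insert_absorb)
qed

lemma peer_subfile_cached:
  assumes "valid_demand N K d" and "k' \<in> peers a k Q" and "k' \<noteq> k"
    and "a k \<in> Q" and "Q \<subseteq> {..<Lam}" and "card Q = Suc t"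
  shows "(d k', subfile_index (Q - {a k'})) \<in> placement (a k)"
proof -
  have "k' < K" "a k' \<in> Q" "a k' \<noteq> a k"
    using assms(2,3) slot_inj[of a k' k] by (auto simp: peers_def)
  moreover have "finite Q"
    using assms(5) finite_subset by blast
  ultimately have "Q - {a k'} \<subseteq> {..<Lam}" "card (Q - {a k'}) = t" "a k \<in> Q - {a k'}"
    using assms(4-6) by auto
  then show ?thesis
    using subfile_index[of "Q - {a k'}"] assms(1) \<open>k' < K\<close>
    by (simp add: placement_def valid_demand_def)
qed

lemma decoder_delivery:
  assumes valid: "valid_assoc K Lam L a" and mono: "\<forall>r. 1 \<le> r \<and> r < Lam \<longrightarrow> L (Suc r) \<le> L r"
    and "valid_demand N K d" and "k < K" and "j < Lam choose t"
  shows "decoder a d k (delivery a d W) (mask (placement (a k)) W) j = W (d k, j)"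
proof (cases "a k \<in> g j")
  case True
  then have "(d k, j) \<in> placement (a k)"
    using assms(3-5) by (simp add: placement_def valid_demand_def)
  then show ?thesis
    using True by (simp add: decoder_def mask_def)
next
  case False
  define Q where "Q = insert (a k) (g j)"
  define f where "f k' = W (d k', subfile_index (Q - {a k'}))" for k'
  have "a k < Lam"
    using valid \<open>k < K\<close> by (simp add: valid_assoc_def)
  moreover have "finite (g j)"
    using subfile(1)[OF assms(5)] finite_subset by blast
  ultimately have Q: "a k \<in> Q" "Q \<subseteq> {..<Lam}" "card Q = Suc t"
    using subfile[OF assms(5)] False by (auto simp: Q_def)
  have side_info: "{k'\<in>peers a k Q - {k}. mask (placement (a k)) W (d k', subfile_index (Q - {a k'}))}
      = {k'\<in>peers a k Q - {k}. f k'}"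
    using peer_subfile_cached[where a = a and k = k and Q = Q, OF assms(3) _ _ Q] by (auto simp: mask_def f_def)
  have "decoder a d k (delivery a d W) (mask (placement (a k)) W) j
      = (delivery a d W ! position a (leader a k Q, subfile_index (Q - {a (leader a k Q)}))
         \<noteq> odd (card {k'\<in>peers a k Q - {k}. mask (placement (a k)) W (d k', subfile_index (Q - {a k'}))}))"
    unfolding decoder_def Let_def using False by (simp only: Q_def[symmetric] if_False)
  also have "\<dots> = (odd (card {k'\<in>peers a k Q. f k'}) \<noteq> odd (card {k'\<in>peers a k Q - {k}. f k'}))"
    unfolding delivery_at_leader[OF valid mono \<open>k < K\<close> Q] side_info by (simp add: coded_bit_def f_def)
  also have "\<dots> = f k"
    using odd_card_filter_remove[of "peers a k Q" k f] \<open>k < K\<close> Q(1)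
    by (auto simp: peers_def)
  also have "\<dots> = W (d k, j)"
    using False subfile(3)[OF assms(5)] by (simp add: f_def Q_def)
  finally show ?thesis .
qed

lemma achievable_f_profile:
  assumes mono: "\<forall>r. 1 \<le> r \<and> r < Lam \<longrightarrow> L (Suc r) \<le> L r" and "1 \<le> t" and "t \<le> Lam"
  shows "achievable N K Lam (real t / real Lam * real N) L (f_profile Lam L t)"
  unfolding achievable_def
proof (intro exI conjI allI impI)
  show "0 < Lam choose t"
    using \<open>t \<le> Lam\<close> by simp
  show "placement l \<subseteq> {..<N} \<times> {..<Lam choose t}" for l
    by (auto simp: placement_def)
  show "real (card (placement l)) \<le> real t / real Lam * real N * real (Lam choose t)" if "l < Lam" for l
    using card_placement[OF that \<open>1 \<le> t\<close>] by simp
  fix a d assume "valid_assoc K Lam L a \<and> valid_demand N K d"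
  then have valid: "valid_assoc K Lam L a" and "valid_demand N K d" by auto
  show "real (card (leaders a)) \<le> f_profile Lam L t * real (Lam choose t)"
    using card_leaders[OF valid] f_profile_mult_choose[OF \<open>t \<le> Lam\<close>] by simp
  show "length (delivery a d W) = card (leaders a)" for W
    by (rule length_delivery)
  show "decoder a d k (delivery a d W) (mask (placement (a k)) W) j = W (d k, j)"
    if "k < K" and "j < Lam choose t" for k W j
    by (rule decoder_delivery[OF valid mono \<open>valid_demand N K d\<close> that])
qed

end

lemma achievable_f_profile:
  assumes "\<forall>r. 1 \<le> r \<and> r < Lam \<longrightarrow> L (Suc r) \<le> L r" and "1 \<le> t" and "t \<le> Lam"
  shows "achievable N K Lam (real t / real Lam * real N) L (f_profile Lam L t)"
proof -
  have "finite {S. S \<subseteq> {..<Lam} \<and> card S = t}"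
    by (rule finite_subset[of _ "Pow {..<Lam}"]) auto
  then obtain g where "bij_betw g {0..<card {S. S \<subseteq> {..<Lam} \<and> card S = t}} {S. S \<subseteq> {..<Lam} \<and> card S = t}"
    using ex_bij_betw_nat_finite by blast
  then have "shared_cache_delivery Lam t g"
    by unfold_locales (simp add: n_subsets atLeast0LessThan)
  then show ?thesis
    using shared_cache_delivery.achievable_f_profile[OF _ assms] by blast
qed

theorem theorem1:
  fixes N K Lam t :: nat and L :: "nat \<Rightarrow> nat"
  assumes "Lam \<le> K" and "K \<le> N"
    and "\<forall>r. 1 \<le> r \<and> r < Lam \<longrightarrow> L (Suc r) \<le> L r"
    and "(\<Sum>r = 1..Lam. L r) = K"
    and "1 \<le> t" and "t \<le> Lam"
  shows "T_opt N K Lam (real t / real Lam * real N) L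
           = lower_conv_env Lam (f_profile Lam L) (real t)"
proof -
  have "T_opt N K Lam (real t / real Lam * real N) L = f_profile Lam L t"
    unfolding T_opt_def
  proof (rule cInf_eq_minimum)
    show "f_profile Lam L t \<in> {T. achievable N K Lam (real t / real Lam * real N) L T}"
      using achievable_f_profile[OF assms(3,5,6)] by simp
    show "f_profile Lam L t \<le> T" if "T \<in> {T. achievable N K Lam (real t / real Lam * real N) L T}" for T
      using achievable_imp_f_profile_le[OF _ assms(1,2,4,6)] assms(5,6) that by simp
  qed
  also have "\<dots> = lower_conv_env Lam (f_profile Lam L) (real t)"
    by (rule lower_conv_env_f_profile[OF assms(6), symmetric])
  finally show ?thesis .
qed

end
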